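(* Let $\mathcal B$ be a unital $*$-algebra, $\phi:\mathcal B\to\mathbb C$ a positive faithful star-linear functional and $\gamma:\mathcal B\to\mathcal B$ a star-linear map such that $\gamma+\phi$ is completely positive. If for some $t<1$ the map $\gamma+t\phi$ is still completely positive, then the sesquilinear form $\langle\cdot,\cdot\rangle_{\gamma,\phi}$ on the algebraic Fock space $\mathcal F_{alg}(\mathcal B)$ is non-degenerate, i.e. $\langle\xi,\xi\rangle_{\gamma,\phi}=0$ implies $\xi=0$.
   Context: For a star-linear $\psi:\mathcal B\to\mathbb C$ and scalar $s$, $(\gamma+s\psi)[b]:=\gamma[b]+s\psi[b]1_{\mathcal B}$. A map $T:\mathcal B\to\mathcal B$ is completely positive if for every $n$ the entrywise map $M_n(\mathcal B)\to M_n(\mathcal B)$ sends positive elements (finite sums $\sum u_i^*u_i$) to positive elements. $\phi$ is faithful if $\phi[u^*u]=0$ only for $u=0$. The algebraic Fock space is $\mathcal F_{alg}(\mathcal B)=\mathbb C\Omega\oplus\bigoplus_{n\ge1}\mathcal B^{\otimes n}$ (algebraic tensor powers), with the sesquilinear form determined by $\langle\Omega,\Omega\rangle_{\gamma,\phi}=1$, $\Omega$ orthogonal to all tensors, and $\langle u_1\otimes\cdots\otimes u_n, v_1\otimes\cdots\otimes v_k\rangle_{\gamma,\phi}=\delta_{n=k}\,\phi\big[v_n^*(\gamma+\phi)[v_{n-1}^*(\gamma+\phi)[\cdots(\gamma+\phi)[v_1^*u_1]\cdots]u_{n-1}]u_n\big]$, extended linearly in the first and antilinearly in the second argument. *)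

theory Defs
  imports Complex_Main
begin

class unital_star_algebra = ring_1 +
  fixes scaleC :: "complex \<Rightarrow> 'a \<Rightarrow> 'a"
    and star :: "'a \<Rightarrow> 'a"
  assumes scaleC_add_right: "scaleC c (x + y) = scaleC c x + scaleC c y"
    and scaleC_add_left: "scaleC (c + d) x = scaleC c x + scaleC d x"
    and scaleC_scaleC: "scaleC c (scaleC d x) = scaleC (c * d) x"
    and scaleC_one: "scaleC 1 x = x"
    and scaleC_mult_left: "scaleC c x * y = scaleC c (x * y)"
    and scaleC_mult_right: "x * scaleC c y = scaleC c (x * y)"
    and star_add: "star (x + y) = star x + star y"
    and star_scaleC: "star (scaleC c x) = scaleC (cnj c) (star x)"
    and star_mult: "star (x * y) = star y * star x"
    and star_star: "star (star x) = x"

definition star_linear_functional :: "('b::unital_star_algebra \<Rightarrow> complex) \<Rightarrow> bool" where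
  "star_linear_functional \<psi> \<longleftrightarrow>
     (\<forall>x y. \<psi> (x + y) = \<psi> x + \<psi> y) \<and>
     (\<forall>c x. \<psi> (scaleC c x) = c * \<psi> x) \<and>
     (\<forall>x. \<psi> (star x) = cnj (\<psi> x))"

definition star_linear_map :: "('b::unital_star_algebra \<Rightarrow> 'b) \<Rightarrow> bool" where
  "star_linear_map T \<longleftrightarrow>
     (\<forall>x y. T (x + y) = T x + T y) \<and>
     (\<forall>c x. T (scaleC c x) = scaleC c (T x)) \<and>
     (\<forall>x. T (star x) = star (T x))"

definition positive_elem :: "'b::unital_star_algebra \<Rightarrow> bool" where
  "positive_elem b \<longleftrightarrow> (\<exists>us. b = sum_list (map (\<lambda>u. star u * u) us))"

definition positive_functional :: "('b::unital_star_algebra \<Rightarrow> complex) \<Rightarrow> bool" where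
  "positive_functional \<psi> \<longleftrightarrow>
     (\<forall>b. positive_elem b \<longrightarrow> Im (\<psi> b) = 0 \<and> Re (\<psi> b) \<ge> 0)"

definition faithful :: "('b::unital_star_algebra \<Rightarrow> complex) \<Rightarrow> bool" where
  "faithful \<psi> \<longleftrightarrow> (\<forall>u. \<psi> (star u * u) = 0 \<longrightarrow> u = 0)"

text \<open>n x n matrices over B are represented by functions nat => nat => B, only the
entries with indices < n being relevant.\<close>

definition mat_positive :: "nat \<Rightarrow> (nat \<Rightarrow> nat \<Rightarrow> 'b::unital_star_algebra) \<Rightarrow> bool" where
  "mat_positive n M \<longleftrightarrow>
     (\<exists>Us :: (nat \<Rightarrow> nat \<Rightarrow> 'b) list. \<forall>i<n. \<forall>j<n.
        M i j = sum_list (map (\<lambda>U. \<Sum>k<n. star (U k i) * U k j) Us))"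

definition completely_positive :: "('b::unital_star_algebra \<Rightarrow> 'b) \<Rightarrow> bool" where
  "completely_positive T \<longleftrightarrow>
     (\<forall>n M. mat_positive n M \<longrightarrow> mat_positive n (\<lambda>i j. T (M i j)))"

definition shift_map :: "('b::unital_star_algebra \<Rightarrow> 'b) \<Rightarrow> complex \<Rightarrow> ('b \<Rightarrow> complex) \<Rightarrow> 'b \<Rightarrow> 'b" where
  "shift_map \<gamma> s \<psi> b = \<gamma> b + scaleC (s * \<psi> b) 1"

text \<open>The algebraic Fock space C Omega + (+)_{n>=1} B^{(x)n} is realised as the free
complex vector space on words (lists) over B -- the empty word being Omega -- modulo
the subspace spanned by the multilinearity relations in each tensor slot. Elements of
the free vector space are finitely supported functions 'b list => complex.\<close>

definition wdelta :: "'b list \<Rightarrow> 'b list \<Rightarrow> complex" where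
  "wdelta w x = (if x = w then 1 else 0)"

inductive_set tensor_relations :: "('b::unital_star_algebra list \<Rightarrow> complex) set" where
  add_rel: "(\<lambda>w. wdelta (xs @ [a + b] @ ys) w - wdelta (xs @ [a] @ ys) w
                 - wdelta (xs @ [b] @ ys) w) \<in> tensor_relations"
| scale_rel: "(\<lambda>w. wdelta (xs @ [scaleC c a] @ ys) w - c * wdelta (xs @ [a] @ ys) w)
                 \<in> tensor_relations"

text \<open>Complex linear span of the relations: the kernel of the quotient map onto the
algebraic Fock space.\<close>

inductive_set fock_null :: "('b::unital_star_algebra list \<Rightarrow> complex) set" where
  zero: "(\<lambda>w. 0) \<in> fock_null"
| step: "r \<in> tensor_relations \<Longrightarrow> f \<in> fock_null \<Longrightarrow> (\<lambda>w. c * r w + f w) \<in> fock_null"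

text \<open>The form on elementary tensors:
 <u_1..u_n, v_1..v_n> = phi[ v_n* K[ v_{n-1}* K[ ... K[v_1* u_1] ... ] u_{n-1} ] u_n ]
 with K = gamma + phi.\<close>

fun nest :: "('b::unital_star_algebra \<Rightarrow> 'b) \<Rightarrow> ('b \<times> 'b) list \<Rightarrow> 'b \<Rightarrow> 'b" where
  "nest K [] x = x"
| "nest K ((u, v) # ps) x = nest K ps (star v * K x * u)"

definition word_form :: "('b::unital_star_algebra \<Rightarrow> 'b) \<Rightarrow> ('b \<Rightarrow> complex) \<Rightarrow> 'b list \<Rightarrow> 'b list \<Rightarrow> complex" where
  "word_form \<gamma> \<phi> us vs =
     (if length us \<noteq> length vs then 0
      else (case zip us vs of
              [] \<Rightarrow> 1
            | (u1, v1) # ps \<Rightarrow> \<phi> (nest (shift_map \<gamma> 1 \<phi>) ps (star v1 * u1))))"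

definition fock_form :: "('b::unital_star_algebra \<Rightarrow> 'b) \<Rightarrow> ('b \<Rightarrow> complex) \<Rightarrow>
    ('b list \<Rightarrow> complex) \<Rightarrow> ('b list \<Rightarrow> complex) \<Rightarrow> complex" where
  "fock_form \<gamma> \<phi> \<xi> \<eta> =
     (\<Sum>u\<in>{u. \<xi> u \<noteq> 0}. \<Sum>v\<in>{v. \<eta> v \<noteq> 0}. \<xi> u * cnj (\<eta> v) * word_form \<gamma> \<phi> u v)"

end

theory Submission
  imports Defs
begin

text \<open>Write \<open>K = \<gamma> + \<phi>\<close>, \<open>K' = \<gamma> + t\<phi>\<close> and \<open>E = \<phi>(\<cdot>) 1\<close>, so that \<open>K = K' + (1 - t) E\<close>.
Here \<open>K'\<close> is completely positive by hypothesis, and so is \<open>E\<close>, because Gram--Schmidt with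
respect to the faithful positive \<open>\<phi>\<close> yields orthonormal bases spanning any finitely many
elements. By induction on the length \<open>n\<close>, the \<open>B\<close>-valued form
\<open>v\<^sub>n\<^sup>* K[\<dots> K[v\<^sub>1\<^sup>* u\<^sub>1] \<dots>] u\<^sub>n\<close> on words of length \<open>n\<close> dominates, as a matrix over \<open>B\<close>,
\<open>(1 - t)\<^sup>n\<^sup>-\<^sup>1\<close> times the same form built from \<open>E\<close>. Applying \<open>\<phi>\<close>, the part of \<open>\<langle>\<xi>, \<xi>\<rangle>\<close>
coming from tensors of length \<open>n\<close> is at least \<open>(1 - t)\<^sup>n\<^sup>-\<^sup>1 \<Sum>\<^sub>\<alpha> |\<xi>\<^sub>\<alpha>|\<^sup>2\<close>, where the
\<open>\<xi>\<^sub>\<alpha>\<close> are the coordinates of \<open>\<xi>\<close> along the tensors \<open>e\<^sub>\<alpha>\<^sub>1 \<otimes> \<dots> \<otimes> e\<^sub>\<alpha>\<^sub>n\<close> of such a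
basis spanning all letters of \<open>\<xi>\<close>. Hence \<open>\<langle>\<xi>, \<xi>\<rangle> = 0\<close> forces all coordinates to vanish,
and \<open>\<xi>\<close>, which agrees with its basis expansion modulo the tensor relations, is null.\<close>

interpretation scaleC: module "scaleC :: complex \<Rightarrow> 'a::unital_star_algebra \<Rightarrow> 'a"
  by standard (simp_all add: scaleC_add_right scaleC_add_left scaleC_scaleC scaleC_one)

interpretation star: additive "star :: 'a::unital_star_algebra \<Rightarrow> 'a"
  by standard (rule star_add)

lemma (in additive) sum_list: "f (sum_list xs) = sum_list (map f xs)"
  by (induction xs) (simp_all add: add zero)

interpretation scaleC_right: additive "scaleC c :: 'a::unital_star_algebra \<Rightarrow> 'a"
  by standard (rule scaleC_add_right)

lemma star_one [simp]: "star (1::'a::unital_star_algebra) = 1"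
  by (metis mult_1_left star_mult star_star)

lemma scaleC_mult_scaleC:
  "scaleC a x * scaleC b y = scaleC (a * b) (x * (y::'a::unital_star_algebra))"
  by (simp add: scaleC_mult_left scaleC_mult_right mult.commute)

lemma mult_scaleC_mult: "a * scaleC c x * b = scaleC c (a * x * (b::'a::unital_star_algebra))"
  by (simp add: scaleC_mult_left scaleC_mult_right)

definition scalar_map :: "('b::unital_star_algebra \<Rightarrow> complex) \<Rightarrow> 'b \<Rightarrow> 'b" where
  "scalar_map \<phi> x = scaleC (\<phi> x) 1"

lemma shift_map_add:
  "shift_map \<gamma> (s + r) \<phi> x = shift_map \<gamma> s \<phi> x + scaleC r (scalar_map \<phi> x)"
  by (simp add: shift_map_def scalar_map_def algebra_simps)

locale star_functional =
  fixes \<phi> :: "'b::unital_star_algebra \<Rightarrow> complex"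
  assumes star_linear: "star_linear_functional \<phi>"
begin

sublocale phi: additive \<phi>
  by standard (use star_linear in \<open>simp add: star_linear_functional_def\<close>)

lemma phi_scaleC [simp]: "\<phi> (scaleC c x) = c * \<phi> x"
  using star_linear by (simp add: star_linear_functional_def)

lemma phi_star: "\<phi> (star x) = cnj (\<phi> x)"
  using star_linear by (simp add: star_linear_functional_def)

lemma phi_star_mult: "\<phi> (star a * b) = cnj (\<phi> (star b * a))"
  by (metis phi_star star_mult star_star)

lemma phi_mult_sum_scaleC:
  "\<phi> (x * (\<Sum>k\<in>A. scaleC (c k) (e k))) = (\<Sum>k\<in>A. c k * \<phi> (x * e k))"
  by (simp add: sum_distrib_left scaleC_mult_right phi.sum)

end

lemma star_linear_map_shift_map:
  assumes "star_linear_map \<gamma>" and "star_functional \<phi>"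
  shows "star_linear_map (shift_map \<gamma> (complex_of_real r) \<phi>)"
proof -
  interpret star_functional \<phi> by fact
  show ?thesis
    using assms(1)
    by (auto simp: star_linear_map_def shift_map_def phi.add phi_star star_scaleC star.add
        algebra_simps)
qed

section \<open>Positive matrices over \<open>B\<close>\<close>

text \<open>Positivity in \<open>M\<^sub>I(B)\<close> for an arbitrary index set \<open>I\<close> (later a set of words), with the
matrix written as a sum of rank-one matrices \<open>(V i)\<^sup>* V j\<close>.\<close>

definition gram_positive :: "'i set \<Rightarrow> ('i \<Rightarrow> 'i \<Rightarrow> 'b::unital_star_algebra) \<Rightarrow> bool" where
  "gram_positive I M \<longleftrightarrow> (\<exists>Vs. \<forall>i\<in>I. \<forall>j\<in>I. M i j = (\<Sum>V\<leftarrow>Vs. star (V i) * V j))"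

definition gram_preserving :: "'i set \<Rightarrow> ('b::unital_star_algebra \<Rightarrow> 'b) \<Rightarrow> bool" where
  "gram_preserving I T \<longleftrightarrow> (\<forall>M. gram_positive I M \<longrightarrow> gram_positive I (\<lambda>i j. T (M i j)))"

lemma gram_preservingD:
  "gram_preserving I T \<Longrightarrow> gram_positive I M \<Longrightarrow> gram_positive I (\<lambda>i j. T (M i j))"
  by (simp add: gram_preserving_def)

lemma gram_positive_cong:
  "gram_positive I M \<Longrightarrow> (\<And>i j. i \<in> I \<Longrightarrow> j \<in> I \<Longrightarrow> M i j = M' i j) \<Longrightarrow> gram_positive I M'"
  by (simp add: gram_positive_def)

lemma gram_positive_zero: "gram_positive I (\<lambda>i j. 0)"
  unfolding gram_positive_def by (rule exI[of _ "[]"]) simp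

lemma gram_positive_add:
  "gram_positive I A \<Longrightarrow> gram_positive I B \<Longrightarrow> gram_positive I (\<lambda>i j. A i j + B i j)"
proof -
  assume "gram_positive I A" "gram_positive I B"
  then obtain As Bs where "\<forall>i\<in>I. \<forall>j\<in>I. A i j = (\<Sum>V\<leftarrow>As. star (V i) * V j)"
    and "\<forall>i\<in>I. \<forall>j\<in>I. B i j = (\<Sum>V\<leftarrow>Bs. star (V i) * V j)"
    by (auto simp: gram_positive_def)
  then show ?thesis
    unfolding gram_positive_def by (intro exI[of _ "As @ Bs"]) simp
qed

lemma gram_positive_sum_list:
  "(\<And>V. V \<in> set Vs \<Longrightarrow> gram_positive I (A V)) \<Longrightarrow> gram_positive I (\<lambda>i j. \<Sum>V\<leftarrow>Vs. A V i j)"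
  by (induction Vs) (simp_all add: gram_positive_zero gram_positive_add)

lemma gram_positive_scaleC:
  assumes "gram_positive I M" and "0 \<le> r"
  shows "gram_positive I (\<lambda>i j. scaleC (complex_of_real r) (M i j))"
proof -
  obtain Vs where M: "\<forall>i\<in>I. \<forall>j\<in>I. M i j = (\<Sum>V\<leftarrow>Vs. star (V i) * V j)"
    using assms(1) by (auto simp: gram_positive_def)
  have sq: "complex_of_real (sqrt r) * complex_of_real (sqrt r) = complex_of_real r"
    using assms(2) by (simp flip: of_real_mult)
  let ?Ws = "map (\<lambda>V i. scaleC (complex_of_real (sqrt r)) (V i)) Vs"
  have "scaleC (complex_of_real r) (M i j) = (\<Sum>W\<leftarrow>?Ws. star (W i) * W j)"
    if "i \<in> I" "j \<in> I" for i j
    using M that by (simp add: o_def star_scaleC scaleC_mult_scaleC sq scaleC_right.sum_list)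
  then show ?thesis unfolding gram_positive_def by blast
qed

lemma gram_positive_diag_congruence:
  assumes "gram_positive I M"
  shows "gram_positive I (\<lambda>i j. star (a i) * M i j * a j)"
proof -
  obtain Vs where M: "\<forall>i\<in>I. \<forall>j\<in>I. M i j = (\<Sum>V\<leftarrow>Vs. star (V i) * V j)"
    using assms by (auto simp: gram_positive_def)
  let ?Ws = "map (\<lambda>V i. V i * a i) Vs"
  have "star (a i) * M i j * a j = (\<Sum>W\<leftarrow>?Ws. star (W i) * W j)" if "i \<in> I" "j \<in> I" for i j
    using M that by (simp add: o_def star_mult mult.assoc
        flip: sum_list_const_mult sum_list_mult_const)
  then show ?thesis unfolding gram_positive_def by blast
qed

lemma gram_positive_reindex:
  assumes "gram_positive I M" and "g ` J \<subseteq> I"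
  shows "gram_positive J (\<lambda>i j. M (g i) (g j))"
proof -
  obtain Vs where M: "\<forall>i\<in>I. \<forall>j\<in>I. M i j = (\<Sum>V\<leftarrow>Vs. star (V i) * V j)"
    using assms(1) by (auto simp: gram_positive_def)
  have "M (g i) (g j) = (\<Sum>W\<leftarrow>map (\<lambda>V. V \<circ> g) Vs. star (W i) * W j)"
    if "i \<in> J" "j \<in> J" for i j
    using M assms(2) that by (auto simp: o_def)
  then show ?thesis unfolding gram_positive_def by blast
qed

text \<open>A Gram decomposition by row vectors is a decomposition \<open>\<Sum> U\<^sup>* U\<close> in which each
\<open>U\<close> has a single nonzero row.\<close>

lemma mat_positive_iff_gram_positive:
  fixes M :: "nat \<Rightarrow> nat \<Rightarrow> 'a::unital_star_algebra"
  assumes "0 < n"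
  shows "mat_positive n M \<longleftrightarrow> gram_positive {..<n} M"
proof
  assume "mat_positive n M"
  then obtain Us where M: "\<forall>i<n. \<forall>j<n. M i j = (\<Sum>U\<leftarrow>Us. \<Sum>k<n. star (U k i) * U k j)"
    by (auto simp: mat_positive_def)
  have "gram_positive {..<n} (\<lambda>i j. \<Sum>k<n. star (U k i) * U k j)" for U :: "nat \<Rightarrow> nat \<Rightarrow> 'a"
  proof -
    have "(\<Sum>k<n. star (U k i) * U k j) = (\<Sum>V\<leftarrow>map U [0..<n]. star (V i) * V j)" for i j
      by (simp add: o_def interv_sum_list_conv_sum_set_nat atLeast0LessThan)
    then show ?thesis unfolding gram_positive_def by blast
  qed
  then have "gram_positive {..<n} (\<lambda>i j. \<Sum>U\<leftarrow>Us. \<Sum>k<n. star (U k i) * U k j)"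
    by (rule gram_positive_sum_list)
  then show "gram_positive {..<n} M"
    by (rule gram_positive_cong) (simp add: M)
next
  assume "gram_positive {..<n} M"
  then obtain Vs where M: "\<forall>i<n. \<forall>j<n. M i j = (\<Sum>V\<leftarrow>Vs. star (V i) * V j)"
    by (auto simp: gram_positive_def)
  let ?Us = "map (\<lambda>V k i. if k = 0 then V i else 0) Vs"
  have row: "(\<Sum>k<n. star (if k = 0 then V i else 0) * (if k = 0 then V j else 0))
      = star (V i) * V j" for V :: "nat \<Rightarrow> 'a" and i j
  proof -
    have "(\<Sum>k<n. star (if k = 0 then V i else 0) * (if k = 0 then V j else 0))
        = (\<Sum>k<n. if k = 0 then star (V i) * V j else 0)"
      by (rule sum.cong) (simp_all add: star.zero)
    then show ?thesis using assms by simp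
  qed
  then show "mat_positive n M"
    using M unfolding mat_positive_def by (intro exI[of _ ?Us]) (simp add: o_def row)
qed

lemma completely_positive_gram_preserving:
  fixes T :: "'a::unital_star_algebra \<Rightarrow> 'a" and I :: "'i set"
  assumes "completely_positive T" and "finite I"
  shows "gram_preserving I T"
  unfolding gram_preserving_def
proof (intro allI impI)
  fix M :: "'i \<Rightarrow> 'i \<Rightarrow> 'a" assume M: "gram_positive I M"
  define n where "n = card I"
  obtain f where f: "bij_betw f {..<n} I"
    using ex_bij_betw_nat_finite[OF assms(2)] by (auto simp: n_def atLeast0LessThan)
  show "gram_positive I (\<lambda>i j. T (M i j))"
  proof (cases "n = 0")
    case True
    then show ?thesis using assms(2) by (simp add: n_def gram_positive_def)
  next
    case False
    have "gram_positive {..<n} (\<lambda>k l. M (f k) (f l))"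
      by (rule gram_positive_reindex[OF M]) (use f in \<open>simp add: bij_betw_def\<close>)
    then have "gram_positive {..<n} (\<lambda>k l. T (M (f k) (f l)))"
      using assms(1) False
      by (simp add: completely_positive_def flip: mat_positive_iff_gram_positive)
    then have "gram_positive I (\<lambda>i j. T (M (f (inv_into {..<n} f i)) (f (inv_into {..<n} f j))))"
      by (rule gram_positive_reindex) (use bij_betw_inv_into[OF f] in \<open>simp add: bij_betw_def\<close>)
    then show ?thesis
      by (rule gram_positive_cong) (simp add: bij_betw_inv_into_right[OF f])
  qed
qed

lemma gram_preserving_add_scaleC:
  fixes I :: "'i set"
  assumes "gram_preserving I K'" and "gram_preserving I E" and "0 \<le> c"
  shows "gram_preserving I (\<lambda>x. K' x + scaleC (complex_of_real c) (E x))"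
  unfolding gram_preserving_def
proof (intro allI impI)
  fix M :: "'i \<Rightarrow> 'i \<Rightarrow> 'a" assume "gram_positive I M"
  with assms show "gram_positive I (\<lambda>i j. K' (M i j) + scaleC (complex_of_real c) (E (M i j)))"
    by (simp add: gram_positive_add gram_positive_scaleC gram_preservingD)
qed

definition quad_form ::
    "('i \<Rightarrow> complex) \<Rightarrow> 'i set \<Rightarrow> ('i \<Rightarrow> 'i \<Rightarrow> 'b::unital_star_algebra) \<Rightarrow> 'b" where
  "quad_form x I M = (\<Sum>i\<in>I. \<Sum>j\<in>I. scaleC (cnj (x i) * x j) (M i j))"

lemma quad_form_diff: "quad_form x I (\<lambda>i j. M i j - N i j) = quad_form x I M - quad_form x I N"
  by (simp add: quad_form_def scaleC.scale_right_diff_distrib sum_subtractf)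

lemma quad_form_scaleC: "quad_form x I (\<lambda>i j. scaleC a (M i j)) = scaleC a (quad_form x I M)"
  by (simp add: quad_form_def scaleC.scale_sum_right mult.commute)

lemma (in star_functional) phi_quad_form:
  "\<phi> (quad_form x I M) = (\<Sum>i\<in>I. \<Sum>j\<in>I. cnj (x i) * x j * \<phi> (M i j))"
  by (simp add: quad_form_def phi.sum)

lemma sum_list_map_sum: "(\<Sum>V\<leftarrow>Vs. \<Sum>i\<in>I. f V i) = (\<Sum>i\<in>I. \<Sum>V\<leftarrow>Vs. f V i)"
  by (induction Vs) (simp_all add: sum.distrib)

lemma positive_elem_quad_form:
  fixes M :: "'i \<Rightarrow> 'i \<Rightarrow> 'a::unital_star_algebra"
  assumes "gram_positive I M"
  shows "positive_elem (quad_form x I M)"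
proof -
  obtain Vs where M: "\<forall>i\<in>I. \<forall>j\<in>I. M i j = (\<Sum>V\<leftarrow>Vs. star (V i) * V j)"
    using assms by (auto simp: gram_positive_def)
  define w where "w V = (\<Sum>j\<in>I. scaleC (x j) (V j))" for V :: "'i \<Rightarrow> 'a"
  have "star (w V) * w V = (\<Sum>i\<in>I. \<Sum>j\<in>I. scaleC (cnj (x i) * x j) (star (V i) * V j))" for V
    by (simp add: w_def star.sum star_scaleC sum_product scaleC_mult_scaleC)
  then have "quad_form x I M = (\<Sum>V\<leftarrow>Vs. star (w V) * w V)"
    using M by (simp add: quad_form_def scaleC_right.sum_list o_def sum_list_map_sum)
  then show ?thesis
    unfolding positive_elem_def by (intro exI[of _ "map w Vs"]) (simp add: o_def)
qed

section \<open>The \<open>B\<close>-valued form on words\<close>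

text \<open>Only meaningful for nonempty words of equal length; on those,
\<open>word_form \<gamma> \<phi> = \<phi> \<circ> nested_form (\<gamma> + \<phi>)\<close>.\<close>

definition nested_form :: "('b::unital_star_algebra \<Rightarrow> 'b) \<Rightarrow> 'b list \<Rightarrow> 'b list \<Rightarrow> 'b" where
  "nested_form K us vs = nest K (zip (tl us) (tl vs)) (star (hd vs) * hd us)"

lemma nest_snoc: "nest K (ps @ [(u, v)]) x = star v * K (nest K ps x) * u"
  by (induction ps arbitrary: x) auto

lemma nested_form_single [simp]: "nested_form K [u] [v] = star v * u"
  by (simp add: nested_form_def)

lemma nested_form_snoc:
  assumes "length us = length vs" and "us \<noteq> []"
  shows "nested_form K (us @ [a]) (vs @ [b]) = star b * K (nested_form K us vs) * a"
  using assms by (cases us; cases vs) (simp_all add: nested_form_def nest_snoc)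

lemma word_form_eq_nested_form:
  assumes "length us = length vs" and "us \<noteq> []"
  shows "word_form \<gamma> \<phi> us vs = \<phi> (nested_form (shift_map \<gamma> 1 \<phi>) us vs)"
  using assms by (cases us; cases vs) (simp_all add: word_form_def nested_form_def)

lemma (in star_functional) phi_nest_scalar_map:
  "\<phi> (nest (scalar_map \<phi>) ps x) = \<phi> x * prod_list (map (\<lambda>(u, v). \<phi> (star v * u)) ps)"
  by (induction ps arbitrary: x) (auto simp: scalar_map_def mult_scaleC_mult)

lemma (in star_functional) phi_nested_form_scalar_map:
  assumes "length us = length vs" and "us \<noteq> []"
  shows "\<phi> (nested_form (scalar_map \<phi>) us vs)
    = prod_list (map (\<lambda>(u, v). \<phi> (star v * u)) (zip us vs))"
  using assms by (cases us; cases vs) (simp_all add: nested_form_def phi_nest_scalar_map)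

lemma obtain_snoc_family:
  assumes "\<forall>i\<in>I. length (y i) = Suc n"
  obtains z a where "\<forall>i\<in>I. y i = z i @ [a i] \<and> length (z i) = n"
proof
  show "\<forall>i\<in>I. y i = butlast (y i) @ [last (y i)] \<and> length (butlast (y i)) = n"
    using assms by (metis Zero_not_Suc append_butlast_last_id diff_Suc_1 length_0_conv length_butlast)
qed

lemma gram_positive_nested_form:
  assumes T: "gram_preserving I T" and "\<forall>i\<in>I. length (y i) = Suc n"
  shows "gram_positive I (\<lambda>i j. nested_form T (y j) (y i))"
  using assms(2)
proof (induction n arbitrary: y)
  case 0
  then obtain z a where "\<forall>i\<in>I. y i = z i @ [a i] \<and> length (z i) = 0"
    by (rule obtain_snoc_family)
  then have "\<forall>i\<in>I. \<forall>j\<in>I. nested_form T (y j) (y i) = (\<Sum>V\<leftarrow>[a]. star (V i) * V j)"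
    by simp
  then show ?case unfolding gram_positive_def by blast
next
  case (Suc n)
  obtain z a where y: "\<forall>i\<in>I. y i = z i @ [a i] \<and> length (z i) = Suc n"
    using Suc.prems by (rule obtain_snoc_family)
  then have "gram_positive I (\<lambda>i j. nested_form T (z j) (z i))"
    by (intro Suc.IH) simp
  then have "gram_positive I (\<lambda>i j. star (a i) * T (nested_form T (z j) (z i)) * a j)"
    by (rule gram_positive_diag_congruence[OF gram_preservingD[OF T]])
  then show ?case
    by (rule gram_positive_cong) (use y in \<open>simp add: nested_form_snoc flip: length_0_conv\<close>)
qed

text \<open>Induction step: \<open>K(L\<^sub>K) - c\<^sup>n\<^sup>+\<^sup>1 E(L\<^sub>E) = K(L\<^sub>K - c\<^sup>n L\<^sub>E) + c\<^sup>n K'(L\<^sub>E)\<close>, and both terms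
are positive.\<close>

lemma gram_positive_nested_form_diff:
  assumes K: "star_linear_map K" and K': "gram_preserving I K'" and E: "gram_preserving I E"
    and decomp: "\<And>x. K x = K' x + scaleC (complex_of_real c) (E x)" and "0 \<le> c"
    and "\<forall>i\<in>I. length (y i) = Suc n"
  shows "gram_positive I (\<lambda>i j. nested_form K (y j) (y i)
           - scaleC (complex_of_real (c ^ n)) (nested_form E (y j) (y i)))"
  using assms(6)
proof (induction n arbitrary: y)
  case 0
  then obtain z a where "\<forall>i\<in>I. y i = z i @ [a i] \<and> length (z i) = 0"
    by (rule obtain_snoc_family)
  then show ?case
    by (intro gram_positive_cong[OF gram_positive_zero]) simp
next
  case (Suc n)
  interpret K: additive K
    using K by unfold_locales (simp add: star_linear_map_def)
  have K_scaleC: "K (scaleC a x) = scaleC a (K x)" for a x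
    using K by (simp add: star_linear_map_def)
  obtain z a where y: "\<forall>i\<in>I. y i = z i @ [a i] \<and> length (z i) = Suc n"
    using Suc.prems by (rule obtain_snoc_family)
  define \<alpha> where "\<alpha> = complex_of_real (c ^ n)"
  define LK where "LK i j = nested_form K (z j) (z i)" for i j
  define LE where "LE i j = nested_form E (z j) (z i)" for i j
  have P: "gram_positive I (\<lambda>i j. LK i j - scaleC \<alpha> (LE i j))"
    unfolding LK_def LE_def \<alpha>_def using y by (intro Suc.IH) simp
  have "K = (\<lambda>x. K' x + scaleC (complex_of_real c) (E x))"
    using decomp by (rule ext)
  then have K_pres: "gram_preserving I K"
    using gram_preserving_add_scaleC[OF K' E \<open>0 \<le> c\<close>] by simp
  have "gram_positive I LE"
    unfolding LE_def using y by (intro gram_positive_nested_form[OF E, of z n]) simp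
  then have "gram_positive I (\<lambda>i j. scaleC \<alpha> (K' (LE i j)))"
    unfolding \<alpha>_def
    by (rule gram_positive_scaleC[OF gram_preservingD[OF K']]) (simp add: \<open>0 \<le> c\<close>)
  with gram_preservingD[OF K_pres P]
  have "gram_positive I (\<lambda>i j. K (LK i j - scaleC \<alpha> (LE i j)) + scaleC \<alpha> (K' (LE i j)))"
    by (rule gram_positive_add)
  then have G: "gram_positive I (\<lambda>i j. star (a i)
      * (K (LK i j - scaleC \<alpha> (LE i j)) + scaleC \<alpha> (K' (LE i j))) * a j)"
    by (rule gram_positive_diag_congruence)
  have inner: "K (LK i j - scaleC \<alpha> (LE i j)) + scaleC \<alpha> (K' (LE i j))
      = K (LK i j) - scaleC (\<alpha> * complex_of_real c) (E (LE i j))" for i j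
    by (simp add: K.diff K_scaleC decomp[of "LE i j"] scaleC.scale_right_distrib)
  show ?case
    using G by (rule gram_positive_cong)
      (use y in \<open>unfold inner, simp add: LK_def LE_def \<alpha>_def nested_form_snoc mult_scaleC_mult
        right_diff_distrib left_diff_distrib mult.commute flip: length_0_conv\<close>)
qed

section \<open>Orthonormal bases\<close>

definition orth_coeff ::
    "('b::unital_star_algebra \<Rightarrow> complex) \<Rightarrow> 'b list \<Rightarrow> 'b \<Rightarrow> nat \<Rightarrow> complex" where
  "orth_coeff \<phi> es s k = \<phi> (star (es ! k) * s)"

text \<open>For orthonormal \<open>es\<close>, membership of \<open>s\<close> in the span of \<open>es\<close> is expressed as
\<open>orth_proj \<phi> es s = s\<close>.\<close>

definition orth_proj :: "('b::unital_star_algebra \<Rightarrow> complex) \<Rightarrow> 'b list \<Rightarrow> 'b \<Rightarrow> 'b" where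
  "orth_proj \<phi> es s = (\<Sum>k<length es. scaleC (orth_coeff \<phi> es s k) (es ! k))"

definition orthonormal :: "('b::unital_star_algebra \<Rightarrow> complex) \<Rightarrow> 'b list \<Rightarrow> bool" where
  "orthonormal \<phi> es \<longleftrightarrow>
     (\<forall>k<length es. \<forall>l<length es. \<phi> (star (es ! k) * es ! l) = (if k = l then 1 else 0))"

lemma orth_proj_snoc:
  "orth_proj \<phi> (es @ [e]) x = orth_proj \<phi> es x + scaleC (\<phi> (star e * x)) e"
proof -
  have "(\<Sum>k<length es. scaleC (orth_coeff \<phi> (es @ [e]) x k) ((es @ [e]) ! k))
      = orth_proj \<phi> es x"
    unfolding orth_proj_def by (rule sum.cong) (simp_all add: orth_coeff_def nth_append)
  then show ?thesis
    by (simp add: orth_proj_def orth_coeff_def)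
qed

context star_functional
begin

lemma orth_coeff_orth_proj:
  assumes "orthonormal \<phi> es" and "l < length es"
  shows "orth_coeff \<phi> es (orth_proj \<phi> es s) l = orth_coeff \<phi> es s l"
proof -
  have "orth_coeff \<phi> es (orth_proj \<phi> es s) l
      = (\<Sum>k<length es. orth_coeff \<phi> es s k * (if l = k then 1 else 0))"
    using assms unfolding orth_proj_def orthonormal_def
    by (simp add: orth_coeff_def phi_mult_sum_scaleC)
  then show ?thesis
    using assms(2) by (simp add: if_distrib cong: if_cong)
qed

lemma phi_star_mult_orth_proj_eq_0:
  assumes "\<forall>k<length es. \<phi> (star (es ! k) * e) = 0"
  shows "\<phi> (star e * orth_proj \<phi> es x) = 0"
  using assms by (simp add: orth_proj_def phi_mult_sum_scaleC phi_star_mult[of e])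

lemma parseval:
  assumes "orth_proj \<phi> es a = a"
  shows "\<phi> (star b * a) = (\<Sum>k<length es. orth_coeff \<phi> es a k * cnj (orth_coeff \<phi> es b k))"
proof -
  have "\<phi> (star b * a) = \<phi> (star b * orth_proj \<phi> es a)"
    using assms by simp
  then show ?thesis
    by (simp add: orth_proj_def phi_mult_sum_scaleC orth_coeff_def phi_star_mult[of b])
qed

lemma orthonormal_snoc:
  assumes "orthonormal \<phi> es" and "\<forall>k<length es. \<phi> (star (es ! k) * e) = 0"
    and "\<phi> (star e * e) = 1"
  shows "orthonormal \<phi> (es @ [e])"
  unfolding orthonormal_def
proof (intro allI impI)
  fix k l assume "k < length (es @ [e])" and "l < length (es @ [e])"
  then consider "k < length es" "l < length es" | "k < length es" "l = length es"
    | "k = length es" "l < length es" | "k = length es" "l = length es"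
    by fastforce
  then show "\<phi> (star ((es @ [e]) ! k) * (es @ [e]) ! l) = (if k = l then 1 else 0)"
  proof cases
    case 3
    then show ?thesis
      using assms(2) phi_star_mult[of e "es ! l"] by (simp add: nth_append)
  qed (use assms in \<open>simp_all add: nth_append orthonormal_def\<close>)
qed

sublocale scalar: additive "scalar_map \<phi>"
  by standard (simp add: scalar_map_def phi.add scaleC_add_left)

end

locale faithful_positive_functional = star_functional +
  assumes positive: "positive_functional \<phi>"
    and faithful: "faithful \<phi>"
begin

lemma phi_positive_elem: "positive_elem b \<Longrightarrow> 0 \<le> Re (\<phi> b)"
  using positive by (simp add: positive_functional_def)

lemma phi_star_mult_self_pos:
  assumes "u \<noteq> 0"
  obtains \<rho> where "0 < \<rho>" and "\<phi> (star u * u) = complex_of_real \<rho>"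
proof
  have "positive_elem (star u * u)"
    unfolding positive_elem_def by (intro exI[of _ "[u]"]) simp
  then have "Im (\<phi> (star u * u)) = 0" and "0 \<le> Re (\<phi> (star u * u))"
    using positive by (simp_all add: positive_functional_def)
  moreover have "\<phi> (star u * u) \<noteq> 0"
    using faithful assms unfolding faithful_def by blast
  ultimately show "0 < Re (\<phi> (star u * u))"
    and "\<phi> (star u * u) = complex_of_real (Re (\<phi> (star u * u)))"
    by (simp_all add: complex_eq_iff)
qed

lemma gram_schmidt_step:
  assumes es: "orthonormal \<phi> es"
  shows "\<exists>es'. orthonormal \<phi> es' \<and> orth_proj \<phi> es' s = s
    \<and> (\<forall>x. orth_proj \<phi> es x = x \<longrightarrow> orth_proj \<phi> es' x = x)"
proof (cases "orth_proj \<phi> es s = s")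
  case True
  then show ?thesis using es by blast
next
  case False
  define s' where "s' = s - orth_proj \<phi> es s"
  obtain \<rho> where \<rho>: "0 < \<rho>" "\<phi> (star s' * s') = complex_of_real \<rho>"
    using False phi_star_mult_self_pos[of s'] by (auto simp: s'_def)
  define e where "e = scaleC (complex_of_real (1 / sqrt \<rho>)) s'"
  have s'_perp: "\<forall>k<length es. \<phi> (star (es ! k) * s') = 0"
    using orth_coeff_orth_proj[OF es]
    by (simp add: s'_def orth_coeff_def right_diff_distrib phi.diff)
  then have e_perp: "\<forall>k<length es. \<phi> (star (es ! k) * e) = 0"
    by (simp add: e_def scaleC_mult_right)
  have e_s': "\<phi> (star e * s') = complex_of_real (sqrt \<rho>)"
    using \<rho> by (simp add: e_def star_scaleC scaleC_mult_left real_div_sqrt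
        flip: of_real_mult of_real_divide)
  have "\<phi> (star e * e) = 1"
    using \<rho> e_s' by (simp add: e_def scaleC_mult_right flip: of_real_mult)
  then have on: "orthonormal \<phi> (es @ [e])"
    by (rule orthonormal_snoc[OF es e_perp])
  have in_span: "orth_proj \<phi> (es @ [e]) x = x" if "orth_proj \<phi> es x = x" for x
    using phi_star_mult_orth_proj_eq_0[OF e_perp, of x] that by (simp add: orth_proj_snoc)
  have "\<phi> (star e * s) = complex_of_real (sqrt \<rho>)"
    using e_s' phi_star_mult_orth_proj_eq_0[OF e_perp, of s]
    by (simp add: s'_def right_diff_distrib phi.diff)
  then have "scaleC (\<phi> (star e * s)) e = s'"
    using \<rho> by (simp add: e_def flip: of_real_mult)
  then have "orth_proj \<phi> (es @ [e]) s = s"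
    by (simp add: orth_proj_snoc s'_def)
  with on in_span show ?thesis by blast
qed

lemma orthonormal_basis_exists:
  assumes "finite X"
  obtains es where "orthonormal \<phi> es" and "\<forall>s\<in>X. orth_proj \<phi> es s = s"
proof -
  from assms have "\<exists>es. orthonormal \<phi> es \<and> (\<forall>s\<in>X. orth_proj \<phi> es s = s)"
  proof (induction X rule: finite_induct)
    case empty
    show ?case by (intro exI[of _ "[]"]) (simp add: orthonormal_def)
  next
    case (insert s X)
    then obtain es where es: "orthonormal \<phi> es" and X: "\<forall>x\<in>X. orth_proj \<phi> es x = x"
      by blast
    from X gram_schmidt_step[OF es, of s] show ?case by auto
  qed
  then show ?thesis using that by blast
qed

lemma gram_positive_scalar_map_rank_one:
  assumes "finite I"
  shows "gram_positive I (\<lambda>i j. scalar_map \<phi> (star (v i) * v j))"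
proof -
  obtain es where "\<forall>s\<in>v ` I. orth_proj \<phi> es s = s"
    using orthonormal_basis_exists[of "v ` I"] assms by blast
  then have "\<phi> (star (v i) * v j)
      = (\<Sum>k<length es. orth_coeff \<phi> es (v j) k * cnj (orth_coeff \<phi> es (v i) k))"
    if "j \<in> I" for i j
    using that by (simp add: parseval)
  then have "scalar_map \<phi> (star (v i) * v j)
      = (\<Sum>W\<leftarrow>map (\<lambda>k i. scaleC (orth_coeff \<phi> es (v i) k) 1) [0..<length es].
          star (W i) * W j)"
    if "j \<in> I" for i j
    using that by (simp add: scalar_map_def o_def star_scaleC scaleC_mult_scaleC mult.commute
        interv_sum_list_conv_sum_set_nat atLeast0LessThan scaleC.scale_sum_left)
  then show ?thesis unfolding gram_positive_def by blast
qed

lemma gram_preserving_scalar_map: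
  fixes I :: "'i set"
  assumes "finite I"
  shows "gram_preserving I (scalar_map \<phi>)"
  unfolding gram_preserving_def
proof (intro allI impI)
  fix M :: "'i \<Rightarrow> 'i \<Rightarrow> 'a" assume "gram_positive I M"
  then obtain Vs where M: "\<forall>i\<in>I. \<forall>j\<in>I. M i j = (\<Sum>V\<leftarrow>Vs. star (V i) * V j)"
    by (auto simp: gram_positive_def)
  have "gram_positive I (\<lambda>i j. \<Sum>V\<leftarrow>Vs. scalar_map \<phi> (star (V i) * V j))"
    using assms by (intro gram_positive_sum_list gram_positive_scalar_map_rank_one)
  then show "gram_positive I (\<lambda>i j. scalar_map \<phi> (M i j))"
    by (rule gram_positive_cong) (simp add: M scalar.sum_list o_def)
qed

end

section \<open>Basis expansion in the Fock space\<close>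

definition index_words :: "nat \<Rightarrow> nat \<Rightarrow> nat list set" where
  "index_words d n = {\<alpha>. set \<alpha> \<subseteq> {..<d} \<and> length \<alpha> = n}"

lemma finite_index_words: "finite (index_words d n)"
  unfolding index_words_def by (rule finite_lists_length_eq) simp

lemma index_words_0 [simp]: "index_words d 0 = {[]}"
  by (auto simp: index_words_def)

lemma sum_index_words_Suc:
  "(\<Sum>\<alpha>\<in>index_words d (Suc n). f \<alpha>) = (\<Sum>k<d. \<Sum>\<alpha>\<in>index_words d n. f (k # \<alpha>))"
proof -
  have "index_words d (Suc n) = (\<lambda>(\<alpha>, k). k # \<alpha>) ` (index_words d n \<times> {..<d})"
    unfolding index_words_def by (rule lists_length_Suc_eq)
  moreover have "inj_on (\<lambda>(\<alpha>, k). k # \<alpha>) (index_words d n \<times> {..<d})"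
    by (auto simp: inj_on_def)
  ultimately have "(\<Sum>\<alpha>\<in>index_words d (Suc n). f \<alpha>)
      = (\<Sum>\<alpha>\<in>index_words d n. \<Sum>k<d. f (k # \<alpha>))"
    by (simp add: sum.reindex sum.cartesian_product split_def)
  then show ?thesis
    by (simp add: sum.swap[of _ "index_words d n"])
qed

text \<open>The coefficient of the word \<open>u\<close> along the basis tensor \<open>es!\<alpha>\<^sub>1 \<otimes> \<dots> \<otimes> es!\<alpha>\<^sub>n\<close>.\<close>

fun word_coeff ::
    "('b::unital_star_algebra \<Rightarrow> complex) \<Rightarrow> 'b list \<Rightarrow> 'b list \<Rightarrow> nat list \<Rightarrow> complex" where
  "word_coeff \<phi> es [] [] = 1"
| "word_coeff \<phi> es (s # w) (k # \<alpha>) = orth_coeff \<phi> es s k * word_coeff \<phi> es w \<alpha>"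
| "word_coeff \<phi> es _ _ = 0"

definition tensor_coord :: "('b::unital_star_algebra \<Rightarrow> complex) \<Rightarrow> 'b list \<Rightarrow>
    ('b list \<Rightarrow> complex) \<Rightarrow> 'b list set \<Rightarrow> nat list \<Rightarrow> complex" where
  "tensor_coord \<phi> es \<xi> A \<alpha> = (\<Sum>u\<in>A. \<xi> u * word_coeff \<phi> es u \<alpha>)"

lemma (in star_functional) prod_list_parseval:
  assumes "length us = length vs" and "\<forall>a\<in>set us. orth_proj \<phi> es a = a"
  shows "prod_list (map (\<lambda>(a, b). \<phi> (star b * a)) (zip us vs))
    = (\<Sum>\<alpha>\<in>index_words (length es) (length us).
        word_coeff \<phi> es us \<alpha> * cnj (word_coeff \<phi> es vs \<alpha>))"
  using assms
proof (induction us arbitrary: vs)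
  case Nil
  then show ?case by simp
next
  case (Cons a us)
  then obtain b vs' where vs: "vs = b # vs'" and "length us = length vs'"
    by (cases vs) auto
  with Cons have "prod_list (map (\<lambda>(a, b). \<phi> (star b * a)) (zip (a # us) vs))
      = (\<Sum>k<length es. orth_coeff \<phi> es a k * cnj (orth_coeff \<phi> es b k))
        * (\<Sum>\<alpha>\<in>index_words (length es) (length us).
            word_coeff \<phi> es us \<alpha> * cnj (word_coeff \<phi> es vs' \<alpha>))"
    by (simp add: parseval)
  then show ?case
    by (simp add: vs sum_index_words_Suc sum_product mult_ac)
qed

lemma sum_sum_cnj_eq_sum_cmod_square:
  fixes x :: "'i \<Rightarrow> complex"
  shows "(\<Sum>i\<in>A. \<Sum>j\<in>A. cnj (x i) * x j * (\<Sum>\<alpha>\<in>B. f j \<alpha> * cnj (f i \<alpha>)))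
    = (\<Sum>\<alpha>\<in>B. complex_of_real ((cmod (\<Sum>j\<in>A. x j * f j \<alpha>))\<^sup>2))"
proof -
  let ?T = "\<lambda>\<alpha> j i. (x j * f j \<alpha>) * cnj (x i * f i \<alpha>)"
  have "(\<Sum>i\<in>A. \<Sum>j\<in>A. cnj (x i) * x j * (\<Sum>\<alpha>\<in>B. f j \<alpha> * cnj (f i \<alpha>)))
      = (\<Sum>j\<in>A. \<Sum>i\<in>A. cnj (x i) * x j * (\<Sum>\<alpha>\<in>B. f j \<alpha> * cnj (f i \<alpha>)))"
    by (rule sum.swap)
  also have "\<dots> = (\<Sum>j\<in>A. \<Sum>i\<in>A. \<Sum>\<alpha>\<in>B. ?T \<alpha> j i)"
    by (simp add: sum_distrib_left mult_ac)
  also have "\<dots> = (\<Sum>j\<in>A. \<Sum>\<alpha>\<in>B. \<Sum>i\<in>A. ?T \<alpha> j i)"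
    by (rule sum.cong[OF refl], rule sum.swap)
  also have "\<dots> = (\<Sum>\<alpha>\<in>B. \<Sum>j\<in>A. \<Sum>i\<in>A. ?T \<alpha> j i)"
    by (rule sum.swap)
  also have "\<dots> = (\<Sum>\<alpha>\<in>B. (\<Sum>j\<in>A. x j * f j \<alpha>) * cnj (\<Sum>j\<in>A. x j * f j \<alpha>))"
    by (simp only: cnj_sum sum_product)
  finally show ?thesis
    by (simp only: complex_norm_square)
qed

lemma fock_null_add: "f \<in> fock_null \<Longrightarrow> g \<in> fock_null \<Longrightarrow> (\<lambda>w. f w + g w) \<in> fock_null"
proof (induction f rule: fock_null.induct)
  case (step r f c)
  then have "(\<lambda>w. c * r w + (f w + g w)) \<in> fock_null"
    by (intro fock_null.step) simp_all
  then show ?case by (simp add: add.assoc)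
qed simp

lemma fock_null_cmult: "f \<in> fock_null \<Longrightarrow> (\<lambda>w. a * f w) \<in> fock_null"
proof (induction f rule: fock_null.induct)
  case zero
  then show ?case using fock_null.zero by simp
next
  case (step r f c)
  then have "(\<lambda>w. (a * c) * r w + a * f w) \<in> fock_null"
    by (intro fock_null.step) simp_all
  then show ?case by (simp add: distrib_left mult.assoc)
qed

lemma tensor_relations_fock_null: "r \<in> tensor_relations \<Longrightarrow> r \<in> fock_null"
  using fock_null.step[OF _ fock_null.zero, of r 1] by simp

lemma fock_null_sum:
  "finite A \<Longrightarrow> (\<And>i. i \<in> A \<Longrightarrow> f i \<in> fock_null) \<Longrightarrow> (\<lambda>w. \<Sum>i\<in>A. f i w) \<in> fock_null"
proof (induction A rule: finite_induct)
  case empty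
  then show ?case using fock_null.zero by simp
next
  case (insert i A)
  then show ?case
    using fock_null_add[of "f i" "\<lambda>w. \<Sum>i\<in>A. f i w"] by simp
qed

lemma fock_null_slot_lin_comb:
  fixes d :: nat
  shows "(\<lambda>w. wdelta (xs @ [(\<Sum>k<d. scaleC (c k) (e k))] @ ys) w
        - (\<Sum>k<d. c k * wdelta (xs @ [e k] @ ys) w)) \<in> fock_null"
proof (induction d)
  case 0
  have "(\<lambda>w. wdelta (xs @ [scaleC 0 0] @ ys) w - 0 * wdelta (xs @ [0] @ ys) w) \<in> fock_null"
    by (intro tensor_relations_fock_null tensor_relations.scale_rel)
  then show ?case by simp
next
  case (Suc d)
  define S where "S = (\<Sum>k<d. scaleC (c k) (e k))"
  define x where "x = scaleC (c d) (e d)"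
  let ?\<delta> = "\<lambda>a w. wdelta (xs @ [a] @ ys) w"
  have "(\<lambda>w. ?\<delta> (S + x) w - ?\<delta> S w - ?\<delta> x w) \<in> fock_null"
    by (intro tensor_relations_fock_null tensor_relations.add_rel)
  moreover have "(\<lambda>w. ?\<delta> x w - c d * ?\<delta> (e d) w) \<in> fock_null"
    unfolding x_def by (intro tensor_relations_fock_null tensor_relations.scale_rel)
  ultimately have "(\<lambda>w. (?\<delta> (S + x) w - ?\<delta> S w - ?\<delta> x w) + ((?\<delta> x w - c d * ?\<delta> (e d) w)
      + (?\<delta> S w - (\<Sum>k<d. c k * ?\<delta> (e k) w)))) \<in> fock_null"
    using Suc.IH unfolding S_def by (intro fock_null_add)
  then show ?case
    by (simp add: S_def x_def algebra_simps)
qed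

lemma fock_null_word_expansion:
  assumes "\<forall>s\<in>set w. orth_proj \<phi> es s = s"
  shows "(\<lambda>x. wdelta (xs @ w) x - (\<Sum>\<alpha>\<in>index_words (length es) (length w).
            word_coeff \<phi> es w \<alpha> * wdelta (xs @ map ((!) es) \<alpha>) x)) \<in> fock_null"
  using assms
proof (induction w arbitrary: xs)
  case Nil
  then show ?case using fock_null.zero by simp
next
  case (Cons s w)
  let ?E = "\<lambda>xs x. \<Sum>\<alpha>\<in>index_words (length es) (length w).
              word_coeff \<phi> es w \<alpha> * wdelta (xs @ map ((!) es) \<alpha>) x"
  have "(\<lambda>x. wdelta (xs @ [s] @ w) x
      - (\<Sum>k<length es. orth_coeff \<phi> es s k * wdelta (xs @ [es ! k] @ w) x)) \<in> fock_null"
    using fock_null_slot_lin_comb[where xs = xs and d = "length es" and c = "orth_coeff \<phi> es s"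
        and e = "(!) es" and ys = w] Cons.prems
    by (simp add: orth_proj_def)
  moreover have "(\<lambda>x. \<Sum>k<length es. orth_coeff \<phi> es s k
      * (wdelta ((xs @ [es ! k]) @ w) x - ?E (xs @ [es ! k]) x)) \<in> fock_null"
    by (intro fock_null_sum fock_null_cmult Cons.IH) (use Cons.prems in simp_all)
  ultimately have "(\<lambda>x. (wdelta (xs @ [s] @ w) x
      - (\<Sum>k<length es. orth_coeff \<phi> es s k * wdelta (xs @ [es ! k] @ w) x))
      + (\<Sum>k<length es. orth_coeff \<phi> es s k
      * (wdelta ((xs @ [es ! k]) @ w) x - ?E (xs @ [es ! k]) x))) \<in> fock_null"
    by (rule fock_null_add)
  then show ?case
    by (simp add: sum_index_words_Suc right_diff_distrib sum_distrib_left sum_subtractf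
        mult.assoc)
qed

lemma fock_null_of_tensor_coords_vanish:
  assumes "finite S" and supp: "\<forall>w. \<xi> w \<noteq> 0 \<longrightarrow> w \<in> S"
    and span: "\<forall>w\<in>S. \<forall>s\<in>set w. orth_proj \<phi> es s = s"
    and coord: "\<And>n \<alpha>. n \<in> length ` S \<Longrightarrow> \<alpha> \<in> index_words (length es) n
      \<Longrightarrow> tensor_coord \<phi> es \<xi> {w \<in> S. length w = n} \<alpha> = 0"
  shows "\<xi> \<in> fock_null"
proof -
  let ?exp = "\<lambda>u x. \<Sum>\<alpha>\<in>index_words (length es) (length u).
                 word_coeff \<phi> es u \<alpha> * wdelta (map ((!) es) \<alpha>) x"
  have "(\<lambda>x. \<Sum>u\<in>S. \<xi> u * (wdelta u x - ?exp u x)) \<in> fock_null"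
    using span by (intro fock_null_sum fock_null_cmult \<open>finite S\<close>
        fock_null_word_expansion[where xs = "[]", simplified]) simp_all
  moreover have "(\<Sum>u\<in>S. \<xi> u * (wdelta u x - ?exp u x)) = \<xi> x" for x
  proof -
    have "(\<Sum>u\<in>S. \<xi> u * ?exp u x)
        = (\<Sum>n\<in>length ` S. \<Sum>u\<in>{w \<in> S. length w = n}. \<xi> u * ?exp u x)"
      by (rule sum.group[symmetric]) (simp_all add: \<open>finite S\<close>)
    also have "\<dots> = (\<Sum>n\<in>length ` S. \<Sum>\<alpha>\<in>index_words (length es) n.
        tensor_coord \<phi> es \<xi> {w \<in> S. length w = n} \<alpha> * wdelta (map ((!) es) \<alpha>) x)"
      unfolding tensor_coord_def
      by (intro sum.cong refl) (simp add: sum_distrib_left sum_distrib_right mult.assoc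
          sum.swap[of _ "index_words (length es) _"])
    also have "\<dots> = 0"
      by (simp add: coord)
    finally have "(\<Sum>u\<in>S. \<xi> u * ?exp u x) = 0" .
    moreover have "(\<Sum>u\<in>S. \<xi> u * wdelta u x) = \<xi> x"
      using supp \<open>finite S\<close> by (auto simp: wdelta_def if_distrib cong: if_cong)
    ultimately show ?thesis
      by (simp add: right_diff_distrib sum_subtractf)
  qed
  ultimately show ?thesis
    by simp
qed

section \<open>Positivity of the form\<close>

definition fock_form_on :: "('b::unital_star_algebra \<Rightarrow> 'b) \<Rightarrow> ('b \<Rightarrow> complex) \<Rightarrow>
    ('b list \<Rightarrow> complex) \<Rightarrow> 'b list set \<Rightarrow> complex" where
  "fock_form_on \<gamma> \<phi> \<xi> A = (\<Sum>u\<in>A. \<Sum>v\<in>A. \<xi> u * cnj (\<xi> v) * word_form \<gamma> \<phi> u v)"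

lemma fock_form_on_length_split:
  assumes "finite S"
  shows "fock_form_on \<gamma> \<phi> \<xi> S
    = (\<Sum>n\<in>length ` S. fock_form_on \<gamma> \<phi> \<xi> {u \<in> S. length u = n})"
proof -
  let ?f = "\<lambda>u v. \<xi> u * cnj (\<xi> v) * word_form \<gamma> \<phi> u v"
  have "fock_form_on \<gamma> \<phi> \<xi> S = (\<Sum>u\<in>S. \<Sum>v\<in>{v \<in> S. length v = length u}. ?f u v)"
    unfolding fock_form_on_def
    by (intro sum.cong refl sum.mono_neutral_right) (auto simp: word_form_def assms)
  also have "\<dots> = (\<Sum>n\<in>length ` S. \<Sum>u\<in>{u \<in> S. length u = n}.
      \<Sum>v\<in>{v \<in> S. length v = length u}. ?f u v)"
    by (rule sum.group[symmetric]) (simp_all add: assms)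
  also have "\<dots> = (\<Sum>n\<in>length ` S. fock_form_on \<gamma> \<phi> \<xi> {u \<in> S. length u = n})"
    unfolding fock_form_on_def by (intro sum.cong refl) auto
  finally show ?thesis .
qed

lemma (in star_functional) fock_form_on_eq_phi_quad_form:
  assumes "\<forall>u\<in>A. length u = Suc m"
  shows "fock_form_on \<gamma> \<phi> \<xi> A = \<phi> (quad_form \<xi> A (\<lambda>v u. nested_form (shift_map \<gamma> 1 \<phi>) u v))"
  unfolding fock_form_on_def phi_quad_form
  by (subst sum.swap)
    (use assms in \<open>simp add: word_form_eq_nested_form mult.commute flip: length_0_conv\<close>)

lemma (in star_functional) phi_quad_form_nested_scalar_map:
  assumes A: "\<forall>u\<in>A. length u = Suc m" and span: "\<forall>u\<in>A. \<forall>s\<in>set u. orth_proj \<phi> es s = s"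
  shows "\<phi> (quad_form \<xi> A (\<lambda>v u. nested_form (scalar_map \<phi>) u v))
    = complex_of_real (\<Sum>\<alpha>\<in>index_words (length es) (Suc m). (cmod (tensor_coord \<phi> es \<xi> A \<alpha>))\<^sup>2)"
proof -
  have "\<phi> (nested_form (scalar_map \<phi>) u v)
      = (\<Sum>\<alpha>\<in>index_words (length es) (Suc m). word_coeff \<phi> es u \<alpha> * cnj (word_coeff \<phi> es v \<alpha>))"
    if "u \<in> A" "v \<in> A" for u v
  proof -
    have l: "length u = length v" "u \<noteq> []" "length u = Suc m"
      using that A by auto
    then show ?thesis
      using prod_list_parseval[OF l(1), of es] span that
      by (simp add: phi_nested_form_scalar_map[OF l(1,2)])
  qed
  then show ?thesis
    by (simp add: phi_quad_form tensor_coord_def sum_sum_cnj_eq_sum_cmod_square)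
qed

lemma (in faithful_positive_functional) Re_fock_form_on_ge_Suc:
  assumes \<gamma>: "star_linear_map \<gamma>"
    and cp: "completely_positive (shift_map \<gamma> (complex_of_real t) \<phi>)"
    and "t < 1" and A: "finite A" "\<forall>u\<in>A. length u = Suc m"
    and span: "\<forall>u\<in>A. \<forall>s\<in>set u. orth_proj \<phi> es s = s"
  shows "(1 - t) ^ m
      * (\<Sum>\<alpha>\<in>index_words (length es) (Suc m). (cmod (tensor_coord \<phi> es \<xi> A \<alpha>))\<^sup>2)
    \<le> Re (fock_form_on \<gamma> \<phi> \<xi> A)"
proof -
  define c where "c = 1 - t"
  define K where "K = shift_map \<gamma> 1 \<phi>"
  define LK where "LK v u = nested_form K u v" for u v
  define LE where "LE v u = nested_form (scalar_map \<phi>) u v" for u v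
  define \<beta> where "\<beta> = complex_of_real (c ^ m)"
  have decomp: "K x = shift_map \<gamma> (complex_of_real t) \<phi> x + scaleC (complex_of_real c) (scalar_map \<phi> x)"
    for x
    using shift_map_add[of \<gamma> "complex_of_real t" "complex_of_real c" \<phi> x] by (simp add: K_def c_def)
  have "star_linear_map K"
    using star_linear_map_shift_map[OF \<gamma> star_functional.intro[OF star_linear], of 1]
    by (simp add: K_def)
  then have "gram_positive A (\<lambda>v u. LK v u - scaleC \<beta> (LE v u))"
    unfolding LK_def LE_def \<beta>_def
    by (rule gram_positive_nested_form_diff[OF _ completely_positive_gram_preserving[OF cp A(1)]
        gram_preserving_scalar_map[OF A(1)], where y = "\<lambda>u. u"])
      (use A \<open>t < 1\<close> in \<open>simp_all add: decomp c_def\<close>)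
  then have "0 \<le> Re (\<phi> (quad_form \<xi> A (\<lambda>v u. LK v u - scaleC \<beta> (LE v u))))"
    by (intro phi_positive_elem positive_elem_quad_form)
  moreover have "fock_form_on \<gamma> \<phi> \<xi> A = \<phi> (quad_form \<xi> A LK)"
    unfolding LK_def K_def by (rule fock_form_on_eq_phi_quad_form[OF A(2)])
  moreover have "quad_form \<xi> A LK
      = quad_form \<xi> A (\<lambda>v u. LK v u - scaleC \<beta> (LE v u)) + scaleC \<beta> (quad_form \<xi> A LE)"
    by (simp add: quad_form_diff quad_form_scaleC)
  moreover have "\<phi> (quad_form \<xi> A LE) = complex_of_real
      (\<Sum>\<alpha>\<in>index_words (length es) (Suc m). (cmod (tensor_coord \<phi> es \<xi> A \<alpha>))\<^sup>2)"
    unfolding LE_def by (rule phi_quad_form_nested_scalar_map[OF A(2) span])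
  ultimately show ?thesis
    by (simp add: phi.add \<beta>_def c_def)
qed

lemma (in faithful_positive_functional) Re_fock_form_on_ge:
  assumes "star_linear_map \<gamma>" and "completely_positive (shift_map \<gamma> (complex_of_real t) \<phi>)"
    and "t < 1" and A: "finite A" "\<forall>u\<in>A. length u = n"
    and "\<forall>u\<in>A. \<forall>s\<in>set u. orth_proj \<phi> es s = s"
  shows "(1 - t) ^ (n - 1)
      * (\<Sum>\<alpha>\<in>index_words (length es) n. (cmod (tensor_coord \<phi> es \<xi> A \<alpha>))\<^sup>2)
    \<le> Re (fock_form_on \<gamma> \<phi> \<xi> A)"
proof (cases n)
  case 0
  then have "A \<subseteq> {[]}"
    using A by auto
  then consider "A = {}" | "A = {[]}"
    by blast
  then show ?thesis
    by cases (simp_all add: 0 fock_form_on_def tensor_coord_def word_form_def complex_mult_cnj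
        cmod_power2)
next
  case (Suc m)
  then show ?thesis
    using Re_fock_form_on_ge_Suc assms by simp
qed

lemma (in faithful_positive_functional) tensor_coord_eq_0_if_fock_form_on_eq_0:
  assumes "star_linear_map \<gamma>" and "completely_positive (shift_map \<gamma> (complex_of_real t) \<phi>)"
    and "t < 1" and S: "finite S" and span: "\<forall>w\<in>S. \<forall>s\<in>set w. orth_proj \<phi> es s = s"
    and zero: "fock_form_on \<gamma> \<phi> \<xi> S = 0"
    and n: "n \<in> length ` S" and \<alpha>: "\<alpha> \<in> index_words (length es) n"
  shows "tensor_coord \<phi> es \<xi> {w \<in> S. length w = n} \<alpha> = 0"
proof -
  let ?level = "\<lambda>n. {w \<in> S. length w = n}"
  let ?sq = "\<lambda>n. \<Sum>\<alpha>\<in>index_words (length es) n.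
    (cmod (tensor_coord \<phi> es \<xi> (?level n) \<alpha>))\<^sup>2"
  have bound: "(1 - t) ^ (n - 1) * ?sq n \<le> Re (fock_form_on \<gamma> \<phi> \<xi> (?level n))" for n
    using assms(1-3) S span by (intro Re_fock_form_on_ge) auto
  have sq_nonneg: "0 \<le> (1 - t) ^ (n - 1) * ?sq n" for n
    using \<open>t < 1\<close> by (simp add: sum_nonneg)
  have "(\<Sum>n\<in>length ` S. Re (fock_form_on \<gamma> \<phi> \<xi> (?level n))) = 0"
    using zero fock_form_on_length_split[OF S] by (simp flip: Re_sum)
  moreover have "0 \<le> Re (fock_form_on \<gamma> \<phi> \<xi> (?level n))" for n
    using sq_nonneg bound by (rule order_trans)
  ultimately have "Re (fock_form_on \<gamma> \<phi> \<xi> (?level n)) = 0"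
    using S n by (auto simp: sum_nonneg_eq_0_iff)
  then have "(1 - t) ^ (n - 1) * ?sq n = 0"
    using bound[of n] sq_nonneg[of n] by linarith
  then have "?sq n = 0"
    using \<open>t < 1\<close> by simp
  then show ?thesis
    using \<alpha> by (simp add: sum_nonneg_eq_0_iff finite_index_words)
qed

theorem lemma2p4:
  fixes \<gamma> :: "'b::unital_star_algebra \<Rightarrow> 'b"
    and \<phi> :: "'b \<Rightarrow> complex"
    and t :: real
    and \<xi> :: "'b list \<Rightarrow> complex"
  assumes "star_linear_functional \<phi>"
    and "positive_functional \<phi>"
    and "faithful \<phi>"
    and "star_linear_map \<gamma>"
    and "completely_positive (shift_map \<gamma> 1 \<phi>)"
    and "t < 1"
    and "completely_positive (shift_map \<gamma> (complex_of_real t) \<phi>)"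
    and "finite {w. \<xi> w \<noteq> 0}"
    and "fock_form \<gamma> \<phi> \<xi> \<xi> = 0"
  shows "\<xi> \<in> fock_null"
proof -
  interpret faithful_positive_functional \<phi>
    using assms(1-3) by (intro faithful_positive_functional.intro star_functional.intro
        faithful_positive_functional_axioms.intro)
  define S where "S = {w. \<xi> w \<noteq> 0}"
  have S: "finite S"
    using assms(8) by (simp add: S_def)
  then have "finite (\<Union> (set ` S))"
    by simp
  then obtain es where "\<forall>s\<in>\<Union> (set ` S). orth_proj \<phi> es s = s"
    using orthonormal_basis_exists by blast
  then have span: "\<forall>w\<in>S. \<forall>s\<in>set w. orth_proj \<phi> es s = s"
    by auto
  have "fock_form_on \<gamma> \<phi> \<xi> S = 0"
    using assms(9) by (simp add: S_def fock_form_def fock_form_on_def)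
  note coords = tensor_coord_eq_0_if_fock_form_on_eq_0[OF assms(4,7,6) S span this]
  have "\<forall>w. \<xi> w \<noteq> 0 \<longrightarrow> w \<in> S"
    by (simp add: S_def)
  from fock_null_of_tensor_coords_vanish[OF S this span coords] show ?thesis .
qed

end
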